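(* Let $n\in\mathbb{N}=\{1,2,\dots\}$, $0\le i\le n-1$ and $\alpha,\beta>-1$. Let $t_1<\dots<t_n$ be the zeros of $P_n^{(\alpha,\beta)}$, and let $n_0\in\{0,1,\dots,n\}$ be such that $0\in[t_{n_0},t_{n_0+1})$, with the conventions $t_0=-1$, $t_{n+1}=1$. Write $$A_m:=\sum_{k=0}^i\frac{2^{k+2}\Gamma(n+\alpha+\beta+1)}{\Gamma(n+k+\alpha+\beta+2)}\frac{t_m^{i-k}}{(i-k)!}p_{n-1-k}^{(\alpha+1+k,\beta+1+k)}(t_m).$$ (i) If $i$ is even, then $$\int_{-1}^1\frac{|t|^i}{i!}|p_n^{(\alpha,\beta)}(t)|\,dt=\sum_{m=1}^n(-1)^{m+n}A_m.$$ (ii) If $i$ is odd, then $$\int_{-1}^1\frac{|t|^i}{i!}|p_n^{(\alpha,\beta)}(t)|\,dt=\sum_{m=1}^{n_0}(-1)^{m+n+1}A_m+(-1)^{n_0+n}\frac{2^{i+2}\Gamma(n+\alpha+\beta+1)}{\Gamma(n+i+\alpha+\beta+2)}p_{n-1-i}^{(\alpha+1+i,\beta+1+i)}(0)+\sum_{m=n_0+1}^n(-1)^{m+n}A_m.$$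
   Context: The Jacobi polynomials are $P_n^{(\alpha,\beta)}(t)=\sum_{j=0}^n\frac{1}{2^n}\binom{n+\alpha}{n-j}\binom{n+\beta}{j}(t-1)^j(t+1)^{n-j}$; for $\alpha,\beta>-1$ their zeros are real, simple and lie in $(-1,1)$. The Jacobi functions on $(-1,1)$ are $p_n^{(\alpha,\beta)}(t)=\frac{(2n+\alpha+\beta+1)\Gamma(n+\alpha+\beta+1)\,n!}{2^{\alpha+\beta+1}\Gamma(n+\alpha+1)\Gamma(n+\beta+1)}(1-t)^{\alpha}(1+t)^{\beta}P_n^{(\alpha,\beta)}(t)$. *)

theory Defs
  imports "HOL-Analysis.Analysis"
begin

definition jacobiP :: "nat \<Rightarrow> real \<Rightarrow> real \<Rightarrow> real \<Rightarrow> real" where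
  "jacobiP n a b t =
     (\<Sum>j=0..n. (1 / 2 ^ n) * ((real n + a) gchoose (n - j)) * ((real n + b) gchoose j)
        * (t - 1) ^ j * (t + 1) ^ (n - j))"

definition jacobi_fun :: "nat \<Rightarrow> real \<Rightarrow> real \<Rightarrow> real \<Rightarrow> real" where
  "jacobi_fun n a b t =
     ((2 * real n + a + b + 1) * Gamma (real n + a + b + 1) * fact n
       / (2 powr (a + b + 1) * Gamma (real n + a + 1) * Gamma (real n + b + 1)))
     * (1 - t) powr a * (1 + t) powr b * jacobiP n a b t"

text \<open>The quantity A_m of the statement, evaluated at the point x = t_m.\<close>
definition jacA :: "nat \<Rightarrow> nat \<Rightarrow> real \<Rightarrow> real \<Rightarrow> real \<Rightarrow> real" where
  "jacA n i a b x =
     (\<Sum>k=0..i. (2 ^ (k + 2) * Gamma (real n + a + b + 1) / Gamma (real n + real k + a + b + 2))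
        * (x ^ (i - k) / fact (i - k))
        * jacobi_fun (n - 1 - k) (a + 1 + real k) (b + 1 + real k) x)"

end

theory Submission
  imports Defs
begin

(* The weighted Jacobi polynomials satisfy the Rodrigues-type formula
     d/dt [(1-t)^(p+1) (1+t)^(q+1) P_m^(p+1,q+1)(t)] = -2(m+1) (1-t)^p (1+t)^q P_(m+1)^(p,q)(t),
   checked termwise after expanding P in powers of 1-t and 1+t. With the normalisation of the
   Jacobi functions it says that
     Phi_k = 2^(k+1) Gamma(n+a+b+1) / Gamma(n+k+a+b+2) * p_(n-1-k)^(a+1+k,b+1+k)
   satisfy Phi_0' = -p_n and Phi_k' = -Phi_(k-1). Hence S(x) = sum_(k<=i) x^(i-k)/(i-k)! Phi_k(x),
   whose value at t_m is A_m/2, is a primitive of -x^i/i! p_n vanishing at -1 and 1.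
   Writing P_n = c prod_m (x - t_m) with c > 0 shows that p_n has sign (-1)^(n-m) on (t_m, t_(m+1)),
   and |x|^i = (-1)^i x^i for x < 0. So between consecutive points of
   t_0 < ... < t_n0 <= 0 < t_(n0+1) < ... < t_(n+1) the integrand is +-x^i/i! p_n; integrating and
   summing by parts leaves the sign jumps times S at the interior points. The jump at 0 vanishes
   when i is even, which gives the two cases. *)

lemma gbinomial_Suc_mult:
  fixes x :: "'a::field_char_0"
  shows "(x - of_nat k) * (x gchoose k) = of_nat (Suc k) * (x gchoose Suc k)"
  using gbinomial_mult_1[of x k] by (simp add: algebra_simps)

lemma gbinomial_pos: "real k - 1 < x \<Longrightarrow> 0 < x gchoose k" for x :: real
  by (simp add: gbinomial_pochhammer' pochhammer_pos)

lemma Gamma_plus1_real_pos: "0 < z \<Longrightarrow> Gamma (z + 1) = z * Gamma z" for z :: real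
  using Gamma_plus1[of z] nonpos_Ints_nonpos[of z] by force

lemma abs_eq_neg_one_power_mult: "0 < (-1) ^ k * y \<Longrightarrow> \<bar>y\<bar> = (-1) ^ k * y"
  for y :: "'a::linordered_idom"
  by (cases "even k") auto

lemma power_abs_eq_if: "\<bar>x\<bar> ^ i = (if x < 0 then (-1) ^ i else 1) * x ^ i"
  for x :: "'a::linordered_idom"
  by (simp add: power_minus[symmetric])

lemma neg_one_power_add_eq_diff:
  assumes "m \<le> n"
  shows "(-1::'a::ring_1) ^ (m + n) = (-1) ^ (n - m)"
proof -
  have split: "m + n = (n - m) + 2 * m" using assms by simp
  show ?thesis unfolding split power_add power_mult by simp
qed

lemma neg_one_power_diff_pred:
  assumes "1 \<le> m" "m \<le> n"
  shows "(-1::'a::ring_1) ^ (n - (m - 1)) - (-1) ^ (n - m) = - 2 * (-1) ^ (m + n)"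
proof -
  have "n - (m - 1) = Suc (n - m)" using assms by auto
  then show ?thesis unfolding neg_one_power_add_eq_diff[OF assms(2)] by (simp add: mult_2)
qed

lemma sum_mult_diff_by_parts:
  fixes \<sigma> g :: "nat \<Rightarrow> 'a::comm_ring"
  shows "(\<Sum>j<Suc N. \<sigma> j * (g (Suc j) - g j))
    = \<sigma> N * g (Suc N) - \<sigma> 0 * g 0 + (\<Sum>m=1..N. (\<sigma> (m - 1) - \<sigma> m) * g m)"
  by (induction N) (simp_all add: algebra_simps)

lemma has_integral_piecewise_derivative:
  fixes y \<sigma> :: "nat \<Rightarrow> real" and f g G :: "real \<Rightarrow> real"
  assumes "\<And>j. j < N \<Longrightarrow> y j \<le> y (Suc j)" and "continuous_on {y 0..y N} G"
    and "\<And>x. y 0 < x \<Longrightarrow> x < y N \<Longrightarrow> (G has_real_derivative g x) (at x)"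
    and "\<And>j x. j < N \<Longrightarrow> y j < x \<Longrightarrow> x < y (Suc j) \<Longrightarrow> f x = \<sigma> j * g x"
  shows "(f has_integral (\<Sum>j<N. \<sigma> j * (G (y (Suc j)) - G (y j)))) {y 0..y N}"
  using assms
proof (induction N)
  case 0
  then show ?case using has_integral_refl(2)[of f "y 0"] by simp
next
  case (Suc N)
  note step = Suc.prems(1)
  have y_mono: "y 0 \<le> y k" if "k \<le> N" for k
    using that
  proof (induction k)
    case (Suc k)
    then show ?case using step[of k] by force
  qed simp
  have last_step: "y N \<le> y (Suc N)" using Suc.prems(1) by simp
  have "(f has_integral (\<Sum>j<N. \<sigma> j * (G (y (Suc j)) - G (y j)))) {y 0..y N}"
  proof (rule Suc.IH)
    show "continuous_on {y 0..y N} G"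
      using Suc.prems(2) by (rule continuous_on_subset) (use last_step in auto)
    show "(G has_real_derivative g x) (at x)" if "y 0 < x" "x < y N" for x
      using Suc.prems(3) that last_step by simp
  qed (use Suc.prems in auto)
  moreover have "(f has_integral (\<sigma> N * (G (y (Suc N)) - G (y N)))) {y N..y (Suc N)}"
  proof -
    have "((\<lambda>x. \<sigma> N * g x) has_integral (\<sigma> N * G (y (Suc N)) - \<sigma> N * G (y N))) {y N..y (Suc N)}"
    proof (rule fundamental_theorem_of_calculus_interior[OF last_step])
      show "continuous_on {y N..y (Suc N)} (\<lambda>x. \<sigma> N * G x)"
        by (intro continuous_intros continuous_on_subset[OF Suc.prems(2)]) (use y_mono in auto)
      show "((\<lambda>x. \<sigma> N * G x) has_vector_derivative \<sigma> N * g x) (at x)" if "x \<in> {y N<..<y (Suc N)}" for x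
        using that y_mono[of N] unfolding has_real_derivative_iff_has_vector_derivative[symmetric]
        by (auto intro!: DERIV_cmult Suc.prems(3))
    qed
    then have "((\<lambda>x. \<sigma> N * g x) has_integral (\<sigma> N * (G (y (Suc N)) - G (y N)))) (cbox (y N) (y (Suc N)))"
      by (simp add: right_diff_distrib)
    then show ?thesis
      by (subst cbox_interval[symmetric], rule has_integral_spike_interior) (use Suc.prems(4)[of N] in auto)
  qed
  ultimately show ?case
    using has_integral_combine[OF y_mono[OF order_refl] last_step] by simp
qed

lemma prod_linear_factors_dvd:
  fixes P :: "'a::idom poly"
  assumes "finite S" "\<forall>s\<in>S. poly P s = 0"
  shows "(\<Prod>s\<in>S. [:-s, 1:]) dvd P"
  using assms
proof (induction S arbitrary: P rule: finite_induct)
  case (insert s S)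
  then obtain R where R: "P = [:-s, 1:] * R"
    using poly_eq_0_iff_dvd by blast
  have "\<forall>s'\<in>S. poly R s' = 0"
    using insert.prems insert.hyps(2) by (auto simp: R)
  then have "(\<Prod>s\<in>S. [:-s, 1:]) dvd R" by (rule insert.IH)
  then show ?case
    unfolding R prod.insert[OF insert.hyps(1,2)] by (rule mult_dvd_mono[OF dvd_refl])
qed simp

lemma poly_eq_const_mult_prod_roots:
  fixes P :: "'a::idom poly" and t :: "nat \<Rightarrow> 'a"
  assumes "degree P \<le> n" "P \<noteq> 0" "inj_on t {1..n}" "\<forall>m\<in>{1..n}. poly P (t m) = 0"
  shows "\<exists>c. \<forall>x. poly P x = c * (\<Prod>m\<in>{1..n}. x - t m)"
proof -
  have "(\<Prod>s\<in>t ` {1..n}. [:-s, 1:]) dvd P"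
    using assms(4) by (intro prod_linear_factors_dvd) auto
  then obtain R where R: "P = (\<Prod>s\<in>t ` {1..n}. [:-s, 1:]) * R" by (elim dvdE)
  have "degree (\<Prod>s\<in>t ` {1..n}. [:-s, 1:]) = n"
    using card_image[OF assms(3)] by (simp add: degree_prod_eq_sum_degree)
  with assms(1,2) have "degree R = 0"
    unfolding R by (subst (asm) degree_mult_eq) (auto simp: prod_zero_iff)
  then obtain c where "R = [:c:]" by (elim degree_eq_zeroE)
  moreover have "(\<Prod>s\<in>t ` {1..n}. x - s) = (\<Prod>m\<in>{1..n}. x - t m)" for x
    using prod.reindex[OF assms(3), of "\<lambda>s. x - s"] by (simp add: comp_def)
  ultimately have "poly P x = c * (\<Prod>m\<in>{1..n}. x - t m)" for x
    unfolding R by (simp add: poly_prod mult.commute)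
  then show ?thesis by blast
qed


section \<open>Differentiating Jacobi functions\<close>

definition weighted_jacobiP :: "nat \<Rightarrow> real \<Rightarrow> real \<Rightarrow> real \<Rightarrow> real" where
  "weighted_jacobiP m p q t = (1 - t) powr p * (1 + t) powr q * jacobiP m p q t"

definition jacobi_coeff :: "nat \<Rightarrow> real \<Rightarrow> real \<Rightarrow> nat \<Rightarrow> real" where
  "jacobi_coeff m p q j = (-1) ^ j / 2 ^ m * ((real m + p) gchoose (m - j)) * ((real m + q) gchoose j)"

definition weight_monomial :: "nat \<Rightarrow> real \<Rightarrow> real \<Rightarrow> nat \<Rightarrow> real \<Rightarrow> real" where
  "weight_monomial m p q j t = (1 - t) powr (p + real j) * (1 + t) powr (q + real (m - j))"

lemma weighted_jacobiP_expansion: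
  assumes "-1 < t" "t < 1"
  shows "weighted_jacobiP m p q t = (\<Sum>j=0..m. jacobi_coeff m p q j * weight_monomial m p q j t)"
  unfolding weighted_jacobiP_def jacobiP_def sum_distrib_left
proof (rule sum.cong[OF refl])
  fix j assume "j \<in> {0..m}"
  have "(t - 1) ^ j = (-1) ^ j * (1 - t) ^ j"
    by (metis minus_diff_eq mult_minus1 power_mult_distrib)
  then show "(1 - t) powr p * (1 + t) powr q * (1 / 2 ^ m * ((real m + p) gchoose (m - j))
      * ((real m + q) gchoose j) * (t - 1) ^ j * (t + 1) ^ (m - j))
    = jacobi_coeff m p q j * weight_monomial m p q j t"
    using assms by (simp add: jacobi_coeff_def weight_monomial_def powr_add powr_realpow algebra_simps)
qed

lemma jacobi_coeff_recurrence:
  assumes "j \<le> Suc m"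
  shows "(if j \<le> m then - (p + 1 + real j) * jacobi_coeff m (p + 1) (q + 1) j else 0)
       + (if 1 \<le> j then (q + 1 + real (m - (j - 1))) * jacobi_coeff m (p + 1) (q + 1) (j - 1) else 0)
       = - 2 * real (Suc m) * jacobi_coeff (Suc m) p q j"
proof -
  define A where "A k = (real (Suc m) + p) gchoose k" for k
  define B where "B k = (real (Suc m) + q) gchoose k" for k
  define s where "s = (-1::real) ^ j / 2 ^ m"
  have coeff: "jacobi_coeff m (p + 1) (q + 1) k = (-1) ^ k / 2 ^ m * A (m - k) * B k" for k
    by (simp add: jacobi_coeff_def A_def B_def add_ac)
  have left: "(if j \<le> m then - (p + 1 + real j) * jacobi_coeff m (p + 1) (q + 1) j else 0)
      = - s * (real (Suc m - j) * A (Suc m - j)) * B j"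
  proof (cases "j \<le> m")
    case True
    have absorb: "(p + 1 + real j) * A (m - j) = real (Suc m - j) * A (Suc m - j)"
      using gbinomial_Suc_mult[of "real (Suc m) + p" "m - j"] True
      by (simp add: A_def Suc_diff_le of_nat_diff algebra_simps)
    have "- (p + 1 + real j) * jacobi_coeff m (p + 1) (q + 1) j
        = - s * ((p + 1 + real j) * A (m - j)) * B j"
      unfolding coeff s_def by (simp add: field_simps)
    with True show ?thesis
      unfolding absorb by simp
  next
    case False
    with assms show ?thesis by simp
  qed
  have right: "(if 1 \<le> j then (q + 1 + real (m - (j - 1))) * jacobi_coeff m (p + 1) (q + 1) (j - 1) else 0)
      = - s * A (Suc m - j) * (real j * B j)"
  proof (cases "j = 0")
    case False
    then obtain l where l: "j = Suc l" by (cases j) auto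
    have absorb: "(q + 1 + real (m - l)) * B l = real j * B j"
      using gbinomial_Suc_mult[of "real (Suc m) + q" l] assms l
      by (simp add: B_def of_nat_diff algebra_simps)
    have "(q + 1 + real (m - l)) * jacobi_coeff m (p + 1) (q + 1) l
        = - s * A (Suc m - j) * ((q + 1 + real (m - l)) * B l)"
      unfolding coeff s_def l by (simp add: field_simps)
    with l show ?thesis
      unfolding absorb by simp
  qed simp
  have "jacobi_coeff (Suc m) p q j = s / 2 * A (Suc m - j) * B j"
    by (simp add: jacobi_coeff_def A_def B_def s_def)
  with left right assms show ?thesis
    by (simp add: of_nat_diff algebra_simps)
qed

lemma weight_monomial_deriv:
  assumes "-1 < x" "x < 1" "j \<le> m"
  shows "(weight_monomial m (p + 1) (q + 1) j has_real_derivative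
      - (p + 1 + real j) * weight_monomial (Suc m) p q j x
      + (q + 1 + real (m - j)) * weight_monomial (Suc m) p q (Suc j) x) (at x)"
proof -
  have "weight_monomial m (p + 1) (q + 1) j
      = (\<lambda>t. (1 - t) powr (p + 1 + real j) * (1 + t) powr (q + 1 + real (m - j)))"
    by (simp add: weight_monomial_def fun_eq_iff add_ac)
  moreover have "q + 1 + real (m - j) = q + real (Suc m - j)"
    "q + 1 + real (m - j) - 1 = q + real (Suc m - Suc j)"
    using assms(3) by (simp_all add: of_nat_diff)
  ultimately show ?thesis
    using assms(1,2)
    by (auto intro!: derivative_eq_intros simp: weight_monomial_def algebra_simps)
qed

lemma weighted_jacobiP_deriv:
  assumes "-1 < x" "x < 1"
  shows "(weighted_jacobiP m (p + 1) (q + 1) has_real_derivative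
      - 2 * real (Suc m) * weighted_jacobiP (Suc m) p q x) (at x)"
proof -
  define c where "c = jacobi_coeff m (p + 1) (q + 1)"
  define V where "V j = weight_monomial (Suc m) p q j x" for j
  define D where "D = (\<Sum>j=0..m. c j * (- (p + 1 + real j) * V j + (q + 1 + real (m - j)) * V (Suc j)))"
  have termwise: "((\<lambda>t. \<Sum>j=0..m. c j * weight_monomial m (p + 1) (q + 1) j t)
      has_real_derivative D) (at x)"
    unfolding D_def V_def by (intro DERIV_sum DERIV_cmult weight_monomial_deriv assms) auto
  have lower: "(\<Sum>j=0..m. - (p + 1 + real j) * c j * V j)
      = (\<Sum>j=0..Suc m. (if j \<le> m then - (p + 1 + real j) * c j else 0) * V j)"
    by (simp add: sum.atLeast0_atMost_Suc)
  have upper: "(\<Sum>j=0..m. (q + 1 + real (m - j)) * c j * V (Suc j))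
      = (\<Sum>j=0..Suc m. (if 1 \<le> j then (q + 1 + real (m - (j - 1))) * c (j - 1) else 0) * V j)"
    unfolding sum.atLeast0_atMost_Suc_shift by simp
  have "D = (\<Sum>j=0..m. - (p + 1 + real j) * c j * V j)
      + (\<Sum>j=0..m. (q + 1 + real (m - j)) * c j * V (Suc j))"
    unfolding D_def sum.distrib[symmetric] by (intro sum.cong refl) (simp add: algebra_simps)
  also have "\<dots> = (\<Sum>j=0..Suc m. (if j \<le> m then - (p + 1 + real j) * c j else 0) * V j)
      + (\<Sum>j=0..Suc m. (if 1 \<le> j then (q + 1 + real (m - (j - 1))) * c (j - 1) else 0) * V j)"
    by (simp only: lower upper)
  also have "\<dots> = (\<Sum>j=0..Suc m. - 2 * real (Suc m) * jacobi_coeff (Suc m) p q j * V j)"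
    unfolding sum.distrib[symmetric] c_def
    by (intro sum.cong refl, subst distrib_right[symmetric], subst jacobi_coeff_recurrence) auto
  also have "\<dots> = - 2 * real (Suc m) * weighted_jacobiP (Suc m) p q x"
    unfolding weighted_jacobiP_expansion[OF assms] V_def sum_distrib_left by (simp add: mult.assoc)
  finally have "D = - 2 * real (Suc m) * weighted_jacobiP (Suc m) p q x" .
  with termwise show ?thesis
  proof (rule has_field_derivative_transform_within_open[OF DERIV_cong, of _ _ _ _ "{-1<..<1}"])
    show "(\<Sum>j=0..m. c j * weight_monomial m (p + 1) (q + 1) j t) = weighted_jacobiP m (p + 1) (q + 1) t"
      if "t \<in> {-1<..<1}" for t
      using that by (simp add: weighted_jacobiP_expansion c_def)
  qed (use assms in auto)
qed

definition jacobi_norm :: "nat \<Rightarrow> real \<Rightarrow> real \<Rightarrow> real" where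
  "jacobi_norm m p q = (2 * real m + p + q + 1) * Gamma (real m + p + q + 1) * fact m
     / (2 powr (p + q + 1) * Gamma (real m + p + 1) * Gamma (real m + q + 1))"

lemma jacobi_fun_eq_norm: "jacobi_fun m p q t = jacobi_norm m p q * weighted_jacobiP m p q t"
  by (simp add: jacobi_fun_def jacobi_norm_def weighted_jacobiP_def mult_ac)

lemma jacobi_norm_pos:
  assumes "0 < m" "p > -1" "q > -1"
  shows "0 < jacobi_norm m p q"
  using assms unfolding jacobi_norm_def by (intro divide_pos_pos mult_pos_pos) auto

lemma jacobi_norm_shift:
  assumes "p > -1" "q > -1"
  shows "jacobi_norm m (p + 1) (q + 1) * (2 * real (Suc m))
      = (real (Suc m) + p + q + 1) / 2 * jacobi_norm (Suc m) p q"
proof -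
  define z where "z = real (Suc m) + p + q + 1"
  have z: "0 < z" using assms by (simp add: z_def)
  have "Gamma (real m + (p + 1) + (q + 1) + 1) = z * Gamma z"
    using Gamma_plus1_real_pos[OF z] by (simp add: z_def add_ac)
  moreover have "2 powr (p + 1 + (q + 1) + 1) = 4 * 2 powr (p + q + 1)"
    using powr_add[of 2 "p + q + 1" 2] by (simp add: add_ac)
  moreover have "0 < Gamma (real (Suc m) + p + 1)" "0 < Gamma (real (Suc m) + q + 1)"
    using assms by auto
  ultimately show ?thesis
    by (simp add: jacobi_norm_def z_def field_simps)
qed

lemma jacobi_fun_deriv:
  assumes "-1 < x" "x < 1" "p > -1" "q > -1"
  shows "(jacobi_fun m (p + 1) (q + 1) has_real_derivative
      - (real (Suc m) + p + q + 1) / 2 * jacobi_fun (Suc m) p q x) (at x)"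
proof -
  define W where "W = weighted_jacobiP (Suc m) p q x"
  have "(jacobi_fun m (p + 1) (q + 1) has_real_derivative
      jacobi_norm m (p + 1) (q + 1) * (- 2 * real (Suc m) * W)) (at x)"
    unfolding jacobi_fun_eq_norm[abs_def] W_def by (intro DERIV_cmult weighted_jacobiP_deriv assms)
  moreover have "jacobi_norm m (p + 1) (q + 1) * (- 2 * real (Suc m) * W)
      = - (real (Suc m) + p + q + 1) / 2 * (jacobi_norm (Suc m) p q * W)"
    using arg_cong[OF jacobi_norm_shift[OF assms(3,4), of m], of "\<lambda>y. - y * W"]
    by (simp add: algebra_simps)
  ultimately show ?thesis
    unfolding jacobi_fun_eq_norm[of "Suc m"] W_def by (rule DERIV_cong)
qed


section \<open>Successive primitives\<close>

definition jacobi_primitive :: "nat \<Rightarrow> real \<Rightarrow> real \<Rightarrow> nat \<Rightarrow> real \<Rightarrow> real" where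
  "jacobi_primitive n a b k x = 2 ^ (k + 1) * Gamma (real n + a + b + 1) / Gamma (real n + real k + a + b + 2)
      * jacobi_fun (n - 1 - k) (a + 1 + real k) (b + 1 + real k) x"

lemma jacobi_primitive_deriv:
  assumes "-1 < x" "x < 1" "a > -1" "b > -1" "k < n"
  shows "(jacobi_primitive n a b k has_real_derivative
      - (2 ^ k * Gamma (real n + a + b + 1) / Gamma (real n + real k + a + b + 1))
        * jacobi_fun (n - k) (a + real k) (b + real k) x) (at x)"
proof -
  define z where "z = real n + real k + a + b + 1"
  define c where "c = 2 ^ (k + 1) * Gamma (real n + a + b + 1) / Gamma (real n + real k + a + b + 2)"
  have z: "0 < z" using assms by (simp add: z_def)
  have shift: "Suc (n - 1 - k) = n - k" "real (n - k) = real n - real k" using assms(5) by auto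
  have "(jacobi_fun (n - 1 - k) (a + real k + 1) (b + real k + 1) has_real_derivative
      - z / 2 * jacobi_fun (n - k) (a + real k) (b + real k) x) (at x)"
    using jacobi_fun_deriv[OF assms(1,2), of "a + real k" "b + real k" "n - 1 - k"] assms(3,4)
    unfolding shift by (simp add: z_def algebra_simps)
  then have "((\<lambda>x. c * jacobi_fun (n - 1 - k) (a + real k + 1) (b + real k + 1) x) has_real_derivative
      c * (- z / 2 * jacobi_fun (n - k) (a + real k) (b + real k) x)) (at x)"
    by (rule DERIV_cmult)
  moreover have "jacobi_primitive n a b k
      = (\<lambda>x. c * jacobi_fun (n - 1 - k) (a + real k + 1) (b + real k + 1) x)"
    by (simp add: fun_eq_iff jacobi_primitive_def c_def add_ac)
  moreover have "Gamma (real n + real k + a + b + 2) = z * Gamma z"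
    using Gamma_plus1_real_pos[OF z] by (simp add: z_def add_ac)
  then have "c * (- z / 2) = - (2 ^ k * Gamma (real n + a + b + 1) / Gamma z)"
    using z by (simp add: c_def field_simps)
  ultimately show ?thesis
    unfolding z_def[symmetric] by (simp add: mult.assoc[symmetric])
qed

lemma jacobi_primitive_deriv_recursive:
  assumes "-1 < x" "x < 1" "a > -1" "b > -1" "k < n"
  shows "(jacobi_primitive n a b k has_real_derivative
      - (if k = 0 then jacobi_fun n a b x else jacobi_primitive n a b (k - 1) x)) (at x)"
proof (cases k)
  case 0
  have "0 < real n + a + b + 1" using assms(3-5) by linarith
  then have "Gamma (real n + a + b + 1) \<noteq> 0" using Gamma_real_pos[of "real n + a + b + 1"] by linarith
  with 0 show ?thesis
    using jacobi_primitive_deriv[OF assms] by simp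
next
  case (Suc l)
  show ?thesis
    using jacobi_primitive_deriv[OF assms] unfolding Suc by (simp add: jacobi_primitive_def add_ac)
qed

definition moment_primitive :: "nat \<Rightarrow> real \<Rightarrow> real \<Rightarrow> nat \<Rightarrow> real \<Rightarrow> real" where
  "moment_primitive n a b i x = (\<Sum>k=0..i. x ^ (i - k) / fact (i - k) * jacobi_primitive n a b k x)"

lemma moment_primitive_deriv:
  assumes "-1 < x" "x < 1" "a > -1" "b > -1" "i < n"
  shows "(moment_primitive n a b i has_real_derivative - (x ^ i / fact i * jacobi_fun n a b x)) (at x)"
proof -
  define \<Phi>' where "\<Phi>' k = - (if k = 0 then jacobi_fun n a b x else jacobi_primitive n a b (k - 1) x)" for k
  have d\<Phi>: "(jacobi_primitive n a b k has_real_derivative \<Phi>' k) (at x)" if "k \<le> i" for k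
    unfolding \<Phi>'_def using that assms by (intro jacobi_primitive_deriv_recursive) auto
  have dpow: "((\<lambda>x. x ^ l / fact l) has_real_derivative real l * x ^ (l - 1) / fact l) (at x)" for l
    using DERIV_cdivide[OF DERIV_pow[of l x], of "fact l"] by simp
  define D where "D = (\<Sum>k=0..i. real (i - k) * x ^ (i - k - 1) / fact (i - k) * jacobi_primitive n a b k x
      + x ^ (i - k) / fact (i - k) * \<Phi>' k)"
  have "(moment_primitive n a b i has_real_derivative D) (at x)"
    unfolding moment_primitive_def[abs_def] D_def
    by (intro DERIV_sum DERIV_cong[OF DERIV_mult[OF dpow d\<Phi>]]) (auto simp: mult.commute)
  moreover have "D = - (x ^ i / fact i * jacobi_fun n a b x)"
  proof (cases i)
    case 0
    then show ?thesis by (simp add: D_def \<Phi>'_def)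
  next
    case (Suc l)
    have "(\<Sum>k=0..Suc l. real (Suc l - k) * x ^ (Suc l - k - 1) / fact (Suc l - k) * jacobi_primitive n a b k x)
        = (\<Sum>k=0..l. x ^ (l - k) / fact (l - k) * jacobi_primitive n a b k x)"
    proof -
      have coeff: "real (Suc l - k) * x ^ (Suc l - k - 1) / fact (Suc l - k) = x ^ (l - k) / fact (l - k)"
        if "k \<le> l" for k
        using that by (simp add: Suc_diff_le del: of_nat_Suc)
      show ?thesis
        unfolding sum.atLeast0_atMost_Suc
        by (simp only: diff_self_eq_0 of_nat_0 mult_zero_left div_0 add_0_right)
          (rule sum.cong[OF refl], simp only: coeff atLeastAtMost_iff)
    qed
    moreover have "(\<Sum>k=0..Suc l. x ^ (Suc l - k) / fact (Suc l - k) * \<Phi>' k)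
        = - (x ^ Suc l / fact (Suc l) * jacobi_fun n a b x)
          - (\<Sum>k=0..l. x ^ (l - k) / fact (l - k) * jacobi_primitive n a b k x)"
      unfolding sum.atLeast0_atMost_Suc_shift by (simp add: \<Phi>'_def sum_negf)
    ultimately show ?thesis
      unfolding D_def Suc sum.distrib by simp
  qed
  ultimately show ?thesis by simp
qed

lemma jacA_eq_moment_primitive: "jacA n i a b x = 2 * moment_primitive n a b i x"
  unfolding jacA_def moment_primitive_def jacobi_primitive_def sum_distrib_left
  by (intro sum.cong refl) (simp add: algebra_simps)

lemma moment_primitive_at_0: "moment_primitive n a b i 0 = jacobi_primitive n a b i 0"
proof -
  have "moment_primitive n a b i 0 = (\<Sum>k=0..i. if k = i then jacobi_primitive n a b i 0 else 0)"
    unfolding moment_primitive_def by (intro sum.cong refl) auto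
  then show ?thesis by simp
qed

lemma jacobi_fun_continuous_on:
  assumes "p > 0" "q > 0"
  shows "continuous_on {-1..1} (jacobi_fun m p q)"
  unfolding jacobi_fun_def[abs_def]
  by (intro continuous_on_mult continuous_on_const continuous_on_powr' continuous_on_diff
      continuous_on_add continuous_on_id) (use assms in \<open>auto simp: jacobiP_def intro!: continuous_intros\<close>)

lemma moment_primitive_continuous_on:
  assumes "a > -1" "b > -1"
  shows "continuous_on {-1..1} (moment_primitive n a b i)"
  unfolding moment_primitive_def[abs_def] jacobi_primitive_def
  by (intro continuous_on_sum continuous_on_mult continuous_on_const continuous_on_divide
      continuous_on_power continuous_on_id jacobi_fun_continuous_on) (use assms in auto)

(* No hypothesis on a, b is needed: 0 powr p = 0 for every p. *)
lemma moment_primitive_at_endpoints: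
  "moment_primitive n a b i 1 = 0" "moment_primitive n a b i (-1) = 0"
  by (simp_all add: moment_primitive_def jacobi_primitive_def jacobi_fun_def)


section \<open>Sign of the Jacobi polynomial between its zeros\<close>

lemma jacobiP_pos_right:
  assumes "a > -1" "b > -1" "1 \<le> x"
  shows "0 < jacobiP n a b x"
  unfolding jacobiP_def
proof (rule sum_pos2[of _ 0])
  have binom_pos: "0 < (real n + a) gchoose (n - j)" "0 < (real n + b) gchoose j" if "j \<le> n" for j
    using that assms by (auto intro!: gbinomial_pos simp: of_nat_diff)
  show "0 < 1 / 2 ^ n * ((real n + a) gchoose (n - 0)) * ((real n + b) gchoose 0) * (x - 1) ^ 0 * (x + 1) ^ (n - 0)"
    using binom_pos(1)[of 0] assms(3) by simp
  show "0 \<le> 1 / 2 ^ n * ((real n + a) gchoose (n - j)) * ((real n + b) gchoose j) * (x - 1) ^ j * (x + 1) ^ (n - j)"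
    if "j \<in> {0..n}" for j
    using binom_pos[of j] assms(3) that by (intro mult_nonneg_nonneg) auto
qed auto

lemma jacobiP_sign_left:
  assumes "a > -1" "b > -1" "x \<le> -1"
  shows "0 < (-1) ^ n * jacobiP n a b x"
  unfolding jacobiP_def sum_distrib_left
proof (rule sum_pos2[of _ n])
  have binom_pos: "0 < (real n + a) gchoose (n - j)" "0 < (real n + b) gchoose j" if "j \<le> n" for j
    using that assms by (auto intro!: gbinomial_pos simp: of_nat_diff)
  have flip: "(-1) ^ n * (1 / 2 ^ n * ((real n + a) gchoose (n - j)) * ((real n + b) gchoose j)
      * (x - 1) ^ j * (x + 1) ^ (n - j))
    = 1 / 2 ^ n * ((real n + a) gchoose (n - j)) * ((real n + b) gchoose j) * ((1 - x) ^ j * (- 1 - x) ^ (n - j))"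
    if "j \<le> n" for j
  proof -
    have "(-1::real) ^ n = (-1) ^ j * (-1) ^ (n - j)" using that by (simp flip: power_add)
    then show ?thesis by (simp add: power_mult_distrib[symmetric] algebra_simps)
  qed
  show "0 < (-1) ^ n * (1 / 2 ^ n * ((real n + a) gchoose (n - n)) * ((real n + b) gchoose n)
      * (x - 1) ^ n * (x + 1) ^ (n - n))"
    unfolding flip[OF order_refl] using binom_pos(2)[of n] assms(3) by simp
  show "0 \<le> (-1) ^ n * (1 / 2 ^ n * ((real n + a) gchoose (n - j)) * ((real n + b) gchoose j)
      * (x - 1) ^ j * (x + 1) ^ (n - j))" if "j \<in> {0..n}" for j
    using that binom_pos[of j] assms(3) unfolding flip[of j, OF conjunct2[OF that[unfolded atLeastAtMost_iff]]]
    by (intro mult_nonneg_nonneg) auto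
qed auto

lemma jacobiP_eq_poly: "\<exists>P. (\<forall>x. poly P x = jacobiP m p q x) \<and> degree P \<le> m"
proof (intro exI conjI allI)
  define P where "P = (\<Sum>j=0..m. smult (1 / 2 ^ m * ((real m + p) gchoose (m - j)) * ((real m + q) gchoose j))
      ([:-1, 1:] ^ j * [:1, 1:] ^ (m - j)))"
  show "poly P x = jacobiP m p q x" for x
    unfolding P_def jacobiP_def poly_sum by (simp add: algebra_simps)
  have "degree (([:-1, 1:] :: real poly) ^ j * [:1, 1:] ^ (m - j)) \<le> m" if "j \<le> m" for j
  proof -
    have "degree (([:-1, 1:] :: real poly) ^ j * [:1, 1:] ^ (m - j))
        \<le> degree (([:-1, 1:] :: real poly) ^ j) + degree (([:1, 1:] :: real poly) ^ (m - j))"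
      by (rule degree_mult_le)
    also have "\<dots> \<le> 1 * j + 1 * (m - j)"
      by (intro add_mono order.trans[OF degree_power_le]) auto
    finally show ?thesis using that by simp
  qed
  then show "degree P \<le> m"
    unfolding P_def by (intro degree_sum_le) (auto intro: order.trans[OF degree_smult_le])
qed

definition zero_node :: "nat \<Rightarrow> (nat \<Rightarrow> real) \<Rightarrow> nat \<Rightarrow> real" where
  "zero_node n t m = (if m = 0 then -1 else if m \<le> n then t m else 1)"

locale jacobi_zeros =
  fixes n :: nat and a b :: real and t :: "nat \<Rightarrow> real"
  assumes a: "a > -1" and b: "b > -1"
    and t_mono: "strict_mono_on {1..n} t"
    and t_zeros: "{x. jacobiP n a b x = 0} = t ` {1..n}"
begin

lemma zeros_in_open_interval:
  assumes "m \<in> {1..n}"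
  shows "-1 < t m" "t m < 1"
proof -
  have "jacobiP n a b (t m) = 0" using t_zeros assms by auto
  then show "t m < 1" "-1 < t m"
    using jacobiP_pos_right[OF a b, of "t m" n] jacobiP_sign_left[OF a b, of "t m" n] by force+
qed

lemma jacobiP_factorization:
  obtains c where "0 < c" "\<And>x. jacobiP n a b x = c * (\<Prod>m\<in>{1..n}. x - t m)"
proof -
  obtain P where P: "\<And>x. poly P x = jacobiP n a b x" "degree P \<le> n"
    using jacobiP_eq_poly by blast
  have "P \<noteq> 0" using P(1)[of 1] jacobiP_pos_right[OF a b, of 1 n] by auto
  moreover have "\<forall>m\<in>{1..n}. poly P (t m) = 0" using P(1) t_zeros by auto
  ultimately obtain c where c: "\<And>x. jacobiP n a b x = c * (\<Prod>m\<in>{1..n}. x - t m)"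
    using poly_eq_const_mult_prod_roots[OF P(2) _ strict_mono_on_imp_inj_on[OF t_mono]] P(1) by metis
  have "0 < (\<Prod>m\<in>{1..n}. 1 - t m)"
    using zeros_in_open_interval by (intro prod_pos) force
  moreover have "0 < c * (\<Prod>m\<in>{1..n}. 1 - t m)"
    using c[of 1] jacobiP_pos_right[OF a b, of 1 n] by simp
  ultimately show ?thesis
    using c that zero_less_mult_pos2 by metis
qed

lemma zero_node_bounds: "-1 \<le> zero_node n t m" "zero_node n t m \<le> 1"
  using zeros_in_open_interval[of m] by (auto simp: zero_node_def)

lemma zero_node_mono:
  assumes "k \<le> l"
  shows "zero_node n t k \<le> zero_node n t l"
proof (cases "k = 0 \<or> n < l")
  case True
  then show ?thesis
    using zero_node_bounds[of k] zero_node_bounds[of l] by (auto simp: zero_node_def)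
next
  case False
  with assms show ?thesis
    using strict_mono_on_leD[OF t_mono, of k l] by (auto simp: zero_node_def)
qed

lemma jacobiP_sign_between_zeros:
  assumes "m \<le> n" "zero_node n t m < x" "x < zero_node n t (Suc m)"
  shows "0 < (-1) ^ (n - m) * jacobiP n a b x"
proof -
  obtain c where c: "0 < c" "jacobiP n a b x = c * (\<Prod>j\<in>{1..n}. x - t j)"
    using jacobiP_factorization by metis
  have below: "0 < (\<Prod>j\<in>{1..m}. x - t j)"
  proof (rule prod_pos)
    fix j assume "j \<in> {1..m}"
    then show "0 < x - t j"
      using zero_node_mono[of j m] assms by (auto simp: zero_node_def)
  qed
  have above: "0 < (\<Prod>j\<in>{Suc m..n}. t j - x)"
  proof (rule prod_pos)
    fix j assume "j \<in> {Suc m..n}"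
    then show "0 < t j - x"
      using zero_node_mono[of "Suc m" j] assms by (auto simp: zero_node_def)
  qed
  have "(\<Prod>j\<in>{1..n}. x - t j) = (\<Prod>j\<in>{1..m}. x - t j) * (\<Prod>j\<in>{Suc m..n}. x - t j)"
    using assms(1) by (subst prod.union_disjoint[symmetric]) (auto intro: prod.cong)
  moreover have "(\<Prod>j\<in>{Suc m..n}. t j - x) = (\<Prod>j\<in>{Suc m..n}. (-1) * (x - t j))"
    by simp
  then have "(\<Prod>j\<in>{Suc m..n}. t j - x) = (-1) ^ (n - m) * (\<Prod>j\<in>{Suc m..n}. x - t j)"
    by (simp only: prod.distrib prod_constant card_atLeastAtMost diff_Suc_Suc minus_nat.diff_0)
  ultimately have "(-1) ^ (n - m) * jacobiP n a b x
      = c * ((\<Prod>j\<in>{1..m}. x - t j) * (\<Prod>j\<in>{Suc m..n}. t j - x))"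
    using c(2) by (simp add: algebra_simps)
  with c(1) below above show ?thesis by simp
qed

lemma abs_jacobi_fun_between_zeros:
  assumes "0 < n" "m \<le> n" "zero_node n t m < x" "x < zero_node n t (Suc m)"
  shows "\<bar>jacobi_fun n a b x\<bar> = (-1) ^ (n - m) * jacobi_fun n a b x"
proof -
  have "-1 < x" "x < 1"
    using zero_node_bounds[of m] zero_node_bounds[of "Suc m"] assms(3,4) by linarith+
  define w where "w = jacobi_norm n a b * (1 - x) powr a * (1 + x) powr b"
  have "0 < w"
    using jacobi_norm_pos[OF assms(1) a b] \<open>-1 < x\<close> \<open>x < 1\<close> by (simp add: w_def)
  moreover have "jacobi_fun n a b x = w * jacobiP n a b x"
    by (simp add: jacobi_fun_eq_norm weighted_jacobiP_def w_def mult_ac)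
  moreover have "\<bar>jacobiP n a b x\<bar> = (-1) ^ (n - m) * jacobiP n a b x"
    by (intro abs_eq_neg_one_power_mult jacobiP_sign_between_zeros assms(2-4))
  ultimately show ?thesis
    by (simp add: abs_mult)
qed

end


section \<open>The integral\<close>

(* Inserting 0 after t_n0 splits (-1, 1) into intervals on which |x|^i p_n(x) = +-x^i p_n(x);
   the j-th interval lies in (t_(node_index n0 j), t_(node_index n0 j + 1)) and
   inserted_sign gives the sign on it. *)
definition node_index :: "nat \<Rightarrow> nat \<Rightarrow> nat" where
  "node_index n0 j = (if j \<le> n0 then j else j - 1)"

definition inserted_node :: "nat \<Rightarrow> (nat \<Rightarrow> real) \<Rightarrow> nat \<Rightarrow> nat \<Rightarrow> real" where
  "inserted_node n t n0 j = (if j = Suc n0 then 0 else zero_node n t (node_index n0 j))"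

definition inserted_sign :: "nat \<Rightarrow> nat \<Rightarrow> nat \<Rightarrow> nat \<Rightarrow> real" where
  "inserted_sign i n n0 j = (if j \<le> n0 then (-1) ^ i else 1) * (-1) ^ (n - node_index n0 j)"

context jacobi_zeros
begin

lemma inserted_node_mono:
  assumes "zero_node n t n0 \<le> 0" "0 < zero_node n t (Suc n0)"
  shows "inserted_node n t n0 j \<le> inserted_node n t n0 (Suc j)"
  using zero_node_mono[of "node_index n0 j" "node_index n0 (Suc j)"] assms
  by (auto simp: inserted_node_def node_index_def)

lemma inserted_node_interval:
  assumes "zero_node n t n0 \<le> 0" "0 < zero_node n t (Suc n0)"
    and "inserted_node n t n0 j < x" "x < inserted_node n t n0 (Suc j)"
  shows "zero_node n t (node_index n0 j) < x" "x < zero_node n t (Suc (node_index n0 j))"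
    and "x < 0 \<longleftrightarrow> j \<le> n0"
proof -
  consider "j < n0" | "j = n0 \<or> j = Suc n0" | "Suc n0 < j" by linarith
  then have "zero_node n t (node_index n0 j) < x \<and> x < zero_node n t (Suc (node_index n0 j))
      \<and> (x < 0 \<longleftrightarrow> j \<le> n0)"
  proof cases
    case 1
    then show ?thesis
      using assms zero_node_mono[of "Suc j" n0] by (auto simp: inserted_node_def node_index_def)
  next
    case 2
    then show ?thesis
      using assms by (auto simp: inserted_node_def node_index_def)
  next
    case 3
    then have "Suc n0 \<le> j - 1" by simp
    with 3 show ?thesis
      using assms zero_node_mono[of "Suc n0" "j - 1"] by (auto simp: inserted_node_def node_index_def)
  qed
  then show "zero_node n t (node_index n0 j) < x" "x < zero_node n t (Suc (node_index n0 j))"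
    and "x < 0 \<longleftrightarrow> j \<le> n0" by auto
qed

lemma moment_abs_jacobi_fun_eq_inserted_sign:
  assumes "0 < n" "n0 \<le> n" "zero_node n t n0 \<le> 0" "0 < zero_node n t (Suc n0)" "j \<le> Suc n"
    and "inserted_node n t n0 j < x" "x < inserted_node n t n0 (Suc j)"
  shows "\<bar>x\<bar> ^ i / fact i * \<bar>jacobi_fun n a b x\<bar>
    = inserted_sign i n n0 j * (x ^ i / fact i * jacobi_fun n a b x)"
proof -
  note interval = inserted_node_interval[OF assms(3,4,6,7)]
  have "node_index n0 j \<le> n" using assms(2,5) by (auto simp: node_index_def)
  then have "\<bar>jacobi_fun n a b x\<bar> = (-1) ^ (n - node_index n0 j) * jacobi_fun n a b x"
    using abs_jacobi_fun_between_zeros[OF assms(1)] interval(1,2) by blast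
  then show ?thesis
    using interval(3) by (simp add: power_abs_eq_if inserted_sign_def)
qed

end

lemma sum_inserted_jumps:
  assumes "n0 \<le> n"
  shows "(\<Sum>m=1..Suc n. (inserted_sign i n n0 m - inserted_sign i n n0 (m - 1))
        * moment_primitive n a b i (inserted_node n t n0 m))
    = (-1) ^ i * (\<Sum>m=1..n0. (-1) ^ (m + n) * jacA n i a b (t m))
      + (1 - (-1) ^ i) * (-1) ^ (n0 + n) * jacobi_primitive n a b i 0
      + (\<Sum>m=n0+1..n. (-1) ^ (m + n) * jacA n i a b (t m))"
proof -
  define T where "T m = (inserted_sign i n n0 m - inserted_sign i n n0 (m - 1))
      * moment_primitive n a b i (inserted_node n t n0 m)" for m
  have jump: "(-1::real) ^ (n - m) - (-1) ^ (n - (m - 1)) = 2 * (-1) ^ (m + n)"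
    if "1 \<le> m" "m \<le> n" for m
    using neg_one_power_diff_pred[OF that, where 'a = real] by simp
  have "{1..Suc n} = {1..n0} \<union> {Suc n0..Suc n}" using assms by auto
  then have "(\<Sum>m=1..Suc n. T m) = (\<Sum>m=1..n0. T m) + (\<Sum>m=Suc n0..Suc n. T m)"
    by (simp add: sum.union_disjoint)
  also have "(\<Sum>m=Suc n0..Suc n. T m) = T (Suc n0) + (\<Sum>m=Suc n0..n. T (Suc m))"
    using assms by (subst sum.atLeast_Suc_atMost) (simp_all only: sum.shift_bounds_cl_Suc_ivl le_SucI)
  also have "(\<Sum>m=1..n0. T m) = (-1) ^ i * (\<Sum>m=1..n0. (-1) ^ (m + n) * jacA n i a b (t m))"
    unfolding sum_distrib_left
  proof (rule sum.cong[OF refl])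
    fix m assume "m \<in> {1..n0}"
    then have m: "1 \<le> m" "m \<le> n0" "m - 1 \<le> n0" "m \<le> n" using assms by auto
    then have "inserted_sign i n n0 m - inserted_sign i n n0 (m - 1) = (-1) ^ i * (2 * (-1) ^ (m + n))"
      using jump[of m] by (simp add: inserted_sign_def node_index_def right_diff_distrib[symmetric])
    moreover have "inserted_node n t n0 m = t m"
      using m by (simp add: inserted_node_def node_index_def zero_node_def)
    ultimately show "T m = (-1) ^ i * ((-1) ^ (m + n) * jacA n i a b (t m))"
      by (simp add: T_def jacA_eq_moment_primitive)
  qed
  also have "T (Suc n0) = (1 - (-1) ^ i) * (-1) ^ (n0 + n) * jacobi_primitive n a b i 0"
    unfolding neg_one_power_add_eq_diff[OF assms]
    by (simp add: T_def inserted_sign_def inserted_node_def node_index_def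
        moment_primitive_at_0 algebra_simps)
  also have "(\<Sum>m=Suc n0..n. T (Suc m)) = (\<Sum>m=n0+1..n. (-1) ^ (m + n) * jacA n i a b (t m))"
  proof (rule sum.cong)
    fix m assume "m \<in> {n0+1..n}"
    then show "T (Suc m) = (-1) ^ (m + n) * jacA n i a b (t m)"
      using jump[of m] by (simp add: T_def inserted_sign_def inserted_node_def node_index_def
          zero_node_def jacA_eq_moment_primitive)
  qed simp
  finally show ?thesis by (simp add: T_def)
qed

lemma (in jacobi_zeros) has_integral_moment_abs_jacobi_fun:
  assumes "i < n" "n0 \<le> n" "zero_node n t n0 \<le> 0" "0 < zero_node n t (Suc n0)"
  shows "((\<lambda>x. \<bar>x\<bar> ^ i / fact i * \<bar>jacobi_fun n a b x\<bar>) has_integral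
      (-1) ^ i * (\<Sum>m=1..n0. (-1) ^ (m + n) * jacA n i a b (t m))
      + (1 - (-1) ^ i) * (-1) ^ (n0 + n) * jacobi_primitive n a b i 0
      + (\<Sum>m=n0+1..n. (-1) ^ (m + n) * jacA n i a b (t m))) {-1..1}"
proof -
  define y where "y = inserted_node n t n0"
  define \<sigma> where "\<sigma> = inserted_sign i n n0"
  define G where "G x = - moment_primitive n a b i x" for x
  have ends: "y 0 = -1" "y (Suc (Suc n)) = 1"
    using assms(2) by (auto simp: y_def inserted_node_def node_index_def zero_node_def)
  have "((\<lambda>x. \<bar>x\<bar> ^ i / fact i * \<bar>jacobi_fun n a b x\<bar>) has_integral
      (\<Sum>j<Suc (Suc n). \<sigma> j * (G (y (Suc j)) - G (y j)))) {y 0..y (Suc (Suc n))}"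
  proof (rule has_integral_piecewise_derivative)
    show "y j \<le> y (Suc j)" for j
      unfolding y_def by (rule inserted_node_mono[OF assms(3,4)])
    show "continuous_on {y 0..y (Suc (Suc n))} G"
      unfolding ends G_def[abs_def] by (intro continuous_intros moment_primitive_continuous_on a b)
    show "(G has_real_derivative x ^ i / fact i * jacobi_fun n a b x) (at x)"
      if "y 0 < x" "x < y (Suc (Suc n))" for x
      using DERIV_minus[OF moment_primitive_deriv[OF _ _ a b assms(1)]] that
      unfolding ends G_def[abs_def] by simp
    show "\<bar>x\<bar> ^ i / fact i * \<bar>jacobi_fun n a b x\<bar> = \<sigma> j * (x ^ i / fact i * jacobi_fun n a b x)"
      if "j < Suc (Suc n)" "y j < x" "x < y (Suc j)" for j x
      using moment_abs_jacobi_fun_eq_inserted_sign[OF _ assms(2-4)] assms(1) that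
      unfolding y_def \<sigma>_def by simp
  qed
  also have "(\<Sum>j<Suc (Suc n). \<sigma> j * (G (y (Suc j)) - G (y j)))
      = (\<Sum>m=1..Suc n. (\<sigma> m - \<sigma> (m - 1)) * moment_primitive n a b i (y m))"
    unfolding sum_mult_diff_by_parts[of \<sigma> "\<lambda>j. G (y j)"]
    by (simp add: ends G_def moment_primitive_at_endpoints algebra_simps)
  finally show ?thesis
    unfolding ends unfolding y_def \<sigma>_def sum_inserted_jumps[OF assms(2)] .
qed

theorem theorem4p5:
  fixes n i n0 :: nat and a b :: real and t :: "nat \<Rightarrow> real"
  assumes "n \<ge> 1" and "i \<le> n - 1" and "a > -1" and "b > -1"
    and "strict_mono_on {1..n} t"
    and "{x. jacobiP n a b x = 0} = t ` {1..n}"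
    and "n0 \<le> n"
    and "n0 = 0 \<or> t n0 \<le> 0"
    and "n0 = n \<or> 0 < t (n0 + 1)"
  shows "(even i \<longrightarrow>
            ((\<lambda>x. \<bar>x\<bar> ^ i / fact i * \<bar>jacobi_fun n a b x\<bar>) has_integral
               (\<Sum>m=1..n. (-1) ^ (m + n) * jacA n i a b (t m))) {-1..1})
       \<and> (odd i \<longrightarrow>
            ((\<lambda>x. \<bar>x\<bar> ^ i / fact i * \<bar>jacobi_fun n a b x\<bar>) has_integral
               ((\<Sum>m=1..n0. (-1) ^ (m + n + 1) * jacA n i a b (t m))
                + (-1) ^ (n0 + n) * (2 ^ (i + 2) * Gamma (real n + a + b + 1)
                     / Gamma (real n + real i + a + b + 2))
                    * jacobi_fun (n - 1 - i) (a + 1 + real i) (b + 1 + real i) 0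
                + (\<Sum>m=n0+1..n. (-1) ^ (m + n) * jacA n i a b (t m)))) {-1..1})"
proof -
  interpret jacobi_zeros n a b t
    using assms(3-6) by unfold_locales
  have i: "i < n" using assms(1,2) by linarith
  have n0: "zero_node n t n0 \<le> 0" "0 < zero_node n t (Suc n0)"
    using assms(7-9) by (auto simp: zero_node_def)
  note integral = has_integral_moment_abs_jacobi_fun[OF i assms(7) n0]
  show ?thesis
  proof (intro conjI impI)
    assume "even i"
    moreover have "{1..n} = {1..n0} \<union> {n0+1..n}" using assms(7) by auto
    ultimately show "((\<lambda>x. \<bar>x\<bar> ^ i / fact i * \<bar>jacobi_fun n a b x\<bar>) has_integral
        (\<Sum>m=1..n. (-1) ^ (m + n) * jacA n i a b (t m))) {-1..1}"
      using integral by (simp add: sum.union_disjoint)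
  next
    assume "odd i"
    then show "((\<lambda>x. \<bar>x\<bar> ^ i / fact i * \<bar>jacobi_fun n a b x\<bar>) has_integral
        ((\<Sum>m=1..n0. (-1) ^ (m + n + 1) * jacA n i a b (t m))
          + (-1) ^ (n0 + n) * (2 ^ (i + 2) * Gamma (real n + a + b + 1) / Gamma (real n + real i + a + b + 2))
            * jacobi_fun (n - 1 - i) (a + 1 + real i) (b + 1 + real i) 0
          + (\<Sum>m=n0+1..n. (-1) ^ (m + n) * jacA n i a b (t m)))) {-1..1}"
      using integral by (simp add: jacobi_primitive_def sum_negf[symmetric] mult_ac)
  qed
qed

end
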